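(* Let $A\subseteq\mathcal{R}$ be outer measurable and let $(I_n)_{n\ge1}$ be pairwise disjoint intervals in $\mathcal{R}$ with $A\cap I_n=\emptyset$ for every $n$ and $\lim_{n\to\infty}l(I_n)=0$. Then $A\cup\bigcup_{n=1}^\infty I_n$ is outer measurable and $$M_u\Big(A\cup\bigcup_{n=1}^\infty I_n\Big)=M_u(A)+\sum_{n=1}^\infty l(I_n).$$
   Context: $\mathcal{R}$ denotes the Levi-Civita field: functions $x:\mathbb{Q}\to\mathbb{R}$ with left-finite support, with componentwise addition and formal power series multiplication, ordered by $x>0$ iff $x\ne0$ and $x[\min\operatorname{supp}x]>0$; it is a non-Archimedean ordered field extension of $\mathbb{R}$, Cauchy complete in the order topology, in which all limits and series are taken (a series $\sum a_n$ converges iff $a_n\to0$). An interval is a set $[a,b],[a,b),(a,b]$ or $(a,b)$ with $a<b$ in $\mathcal{R}$, of length $l=b-a$. A cover of $A\subseteq\mathcal{R}$ is a sequence of intervals $(S_n)_{n\ge1}$ with $A\subseteq\bigcup_n S_n$ and $\sum_n l(S_n)$ convergent in $\mathcal{R}$. $A$ is called outer measurable if the infimum $\inf\{\sum_n l(S_n): (S_n)\text{ a cover of }A\}$ exists in $\mathcal{R}$; this infimum is then called the outer measure $M_u(A)$. *)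

theory Defs
  imports Complex_Main
begin

section \<open>The Levi-Civita field (ordered additive structure)\<close>

typedef lc = "{x :: rat \<Rightarrow> real. \<forall>r. finite {q. x q \<noteq> 0 \<and> q < r}}"
  morphisms lc_coeff Abs_lc
  by (rule exI[of _ "\<lambda>_. 0"]) simp

setup_lifting type_definition_lc

instantiation lc :: "{zero, plus, minus, uminus}"
begin

lift_definition zero_lc :: lc is "\<lambda>_. 0" by simp

lift_definition plus_lc :: "lc \<Rightarrow> lc \<Rightarrow> lc" is "\<lambda>x y q. x q + y q"
proof -
  fix x y :: "rat \<Rightarrow> real" and r :: rat
  assume x: "\<And>r. finite {q. x q \<noteq> 0 \<and> q < r}" and y: "\<And>r. finite {q. y q \<noteq> 0 \<and> q < r}"
  show "finite {q. x q + y q \<noteq> 0 \<and> q < r}"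
    by (rule finite_subset[of _ "{q. x q \<noteq> 0 \<and> q < r} \<union> {q. y q \<noteq> 0 \<and> q < r}"])
       (use x y in auto)
qed

lift_definition uminus_lc :: "lc \<Rightarrow> lc" is "\<lambda>x q. - x q" by simp

lift_definition minus_lc :: "lc \<Rightarrow> lc \<Rightarrow> lc" is "\<lambda>x y q. x q - y q"
proof -
  fix x y :: "rat \<Rightarrow> real" and r :: rat
  assume x: "\<And>r. finite {q. x q \<noteq> 0 \<and> q < r}" and y: "\<And>r. finite {q. y q \<noteq> 0 \<and> q < r}"
  show "finite {q. x q - y q \<noteq> 0 \<and> q < r}"
    by (rule finite_subset[of _ "{q. x q \<noteq> 0 \<and> q < r} \<union> {q. y q \<noteq> 0 \<and> q < r}"])
       (use x y in auto)
qed

instance ..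
end

definition lc_pos :: "lc \<Rightarrow> bool" where
  "lc_pos x \<longleftrightarrow> x \<noteq> 0 \<and>
     (\<exists>q. lc_coeff x q > 0 \<and> (\<forall>p<q. lc_coeff x p = 0))"

instantiation lc :: "{ord, abs}"
begin
definition less_lc :: "lc \<Rightarrow> lc \<Rightarrow> bool" where "less_lc x y \<longleftrightarrow> lc_pos (y - x)"
definition less_eq_lc :: "lc \<Rightarrow> lc \<Rightarrow> bool" where "less_eq_lc x y \<longleftrightarrow> x < y \<or> x = y"
definition abs_lc :: "lc \<Rightarrow> lc" where "abs_lc x = (if x < 0 then - x else x)"
instance ..
end

definition lc_tendsto :: "(nat \<Rightarrow> lc) \<Rightarrow> lc \<Rightarrow> bool" where
  "lc_tendsto a L \<longleftrightarrow> (\<forall>e. 0 < e \<longrightarrow> (\<exists>N. \<forall>n\<ge>N. \<bar>a n - L\<bar> < e))"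

primrec lc_psum :: "(nat \<Rightarrow> lc) \<Rightarrow> nat \<Rightarrow> lc" where
  "lc_psum a 0 = 0"
| "lc_psum a (Suc n) = lc_psum a n + a n"

definition lc_sums :: "(nat \<Rightarrow> lc) \<Rightarrow> lc \<Rightarrow> bool" where
  "lc_sums a s \<longleftrightarrow> lc_tendsto (lc_psum a) s"

definition lc_summable :: "(nat \<Rightarrow> lc) \<Rightarrow> bool" where
  "lc_summable a \<longleftrightarrow> (\<exists>s. lc_sums a s)"

definition lc_suminf :: "(nat \<Rightarrow> lc) \<Rightarrow> lc" where
  "lc_suminf a = (THE s. lc_sums a s)"

definition lc_interval_ab :: "lc \<Rightarrow> lc \<Rightarrow> lc set \<Rightarrow> bool" where
  "lc_interval_ab a b S \<longleftrightarrow> a < b \<and>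
     (S = {a..b} \<or> S = {a..<b} \<or> S = {a<..b} \<or> S = {a<..<b})"

definition lc_interval :: "lc set \<Rightarrow> bool" where
  "lc_interval S \<longleftrightarrow> (\<exists>a b. lc_interval_ab a b S)"

definition lc_len :: "lc set \<Rightarrow> lc" where
  "lc_len S = (THE d. \<exists>a b. lc_interval_ab a b S \<and> d = b - a)"

definition lc_cover :: "lc set \<Rightarrow> (nat \<Rightarrow> lc set) \<Rightarrow> bool" where
  "lc_cover A S \<longleftrightarrow> (\<forall>n. lc_interval (S n)) \<and> A \<subseteq> (\<Union>n. S n)
      \<and> lc_summable (\<lambda>n. lc_len (S n))"

definition lc_is_inf :: "lc \<Rightarrow> lc set \<Rightarrow> bool" where
  "lc_is_inf m X \<longleftrightarrow> (\<forall>x\<in>X. m \<le> x) \<and> (\<forall>m'. (\<forall>x\<in>X. m' \<le> x) \<longrightarrow> m' \<le> m)"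

definition lc_cover_sums :: "lc set \<Rightarrow> lc set" where
  "lc_cover_sums A = {lc_suminf (\<lambda>n. lc_len (S n)) | S. lc_cover A S}"

definition lc_outer_measurable :: "lc set \<Rightarrow> bool" where
  "lc_outer_measurable A \<longleftrightarrow> (\<exists>m. lc_is_inf m (lc_cover_sums A))"

definition lc_Mu :: "lc set \<Rightarrow> lc" where
  "lc_Mu A = (THE m. lc_is_inf m (lc_cover_sums A))"

end

theory Submission
  imports Defs "HOL-Analysis.Continuum_Not_Denumerable"
begin

text \<open>
  A cover of \<open>A\<close> interleaved with the intervals \<open>I n\<close> covers the union, so the outer measure
  of the union is at most \<open>M\<^sub>u(A) + \<Sum>l(I n)\<close>. For the converse, pass from a cover of the union
  to a cover by closed intervals and remove \<open>I 0, \<dots>, I (N - 1)\<close> one at a time: clamping every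
  cover interval to the parts left of, inside and right of \<open>I n\<close> splits its length into three,
  the outer parts still cover everything outside \<open>I n\<close>, and the inner parts cover \<open>I n\<close>, so
  their total length is at least \<open>l(I n)\<close>. Letting \<open>N \<rightarrow> \<infinity>\<close> gives the reverse inequality.

  The last step is a Heine--Borel type lemma, which needs an argument of its own because closed
  intervals of the Levi-Civita field are not compact. Suppose countably many closed intervals of
  total length \<open>\<sigma> < b - a\<close> covered \<open>(a, b)\<close>, and truncate all numbers at the leading exponent
  \<open>q\<close> of \<open>b - a - \<sigma>\<close>. Only finitely many intervals stay nondegenerate, and they leave a gap of
  length \<open>\<kappa> d\<^sup>q\<close> with real \<open>\<kappa> > 0\<close>. The gap contains uncountably many truncated points, while
  the degenerate intervals meet only countably many of them.
\<close>

section \<open>The Levi-Civita field as an ordered real vector space\<close>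

lemma lc_coeff_add [simp]: "lc_coeff (x + y) q = lc_coeff x q + lc_coeff y q"
  by transfer simp

lemma lc_coeff_diff [simp]: "lc_coeff (x - y) q = lc_coeff x q - lc_coeff y q"
  by transfer simp

lemma lc_coeff_uminus [simp]: "lc_coeff (- x) q = - lc_coeff x q"
  by transfer simp

lemma lc_coeff_zero [simp]: "lc_coeff 0 q = 0"
  by transfer simp

lemma lc_eqI: "(\<And>q. lc_coeff x q = lc_coeff y q) \<Longrightarrow> x = y"
  by (metis ext lc_coeff_inject)

lemma lc_support_below_finite: "finite {q. lc_coeff x q \<noteq> 0 \<and> q < r}"
  using lc_coeff[of x] by simp

instance lc :: ab_group_add
  by standard (auto intro!: lc_eqI)

definition lc_vanishes_below :: "rat \<Rightarrow> lc \<Rightarrow> bool" where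
  "lc_vanishes_below r x \<longleftrightarrow> (\<forall>q<r. lc_coeff x q = 0)"

lemma lc_vanishes_below_zero [simp]: "lc_vanishes_below r 0"
  by (simp add: lc_vanishes_below_def)

lemma lc_vanishes_below_add: "lc_vanishes_below r x \<Longrightarrow> lc_vanishes_below r y \<Longrightarrow> lc_vanishes_below r (x + y)"
  by (simp add: lc_vanishes_below_def)

lemma lc_vanishes_below_diff: "lc_vanishes_below r x \<Longrightarrow> lc_vanishes_below r y \<Longrightarrow> lc_vanishes_below r (x - y)"
  by (simp add: lc_vanishes_below_def)

lemma lc_vanishes_below_uminus_iff [simp]: "lc_vanishes_below r (- x) \<longleftrightarrow> lc_vanishes_below r x"
  by (simp add: lc_vanishes_below_def)

lemma lc_vanishes_below_mono: "lc_vanishes_below r x \<Longrightarrow> r' \<le> r \<Longrightarrow> lc_vanishes_below r' x"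
  by (simp add: lc_vanishes_below_def)

lemma lc_vanishes_below_sum:
  "(\<And>i. i \<in> F \<Longrightarrow> lc_vanishes_below r (f i)) \<Longrightarrow> lc_vanishes_below r (sum f F)"
  by (induction F rule: infinite_finite_induct) (auto intro: lc_vanishes_below_add)

lemma lc_eq_zero_if_vanishes_below: "(\<And>r. lc_vanishes_below r x) \<Longrightarrow> x = 0"
  by (rule lc_eqI) (metis lc_vanishes_below_def lc_coeff_zero less_add_one)

lemma lc_leading_exponent_exists:
  assumes "x \<noteq> 0"
  obtains q where "lc_coeff x q \<noteq> 0" "lc_vanishes_below q x"
proof -
  obtain q0 where q0: "lc_coeff x q0 \<noteq> 0"
    using assms lc_eqI[of x 0] by auto
  define F where "F = {q. lc_coeff x q \<noteq> 0 \<and> q < q0 + 1}"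
  have "finite F" "q0 \<in> F"
    using lc_support_below_finite q0 by (auto simp: F_def)
  hence "Min F \<in> F" "\<forall>p\<in>F. Min F \<le> p"
    using Min_in by auto
  moreover have "p \<in> F" if "p < Min F" "lc_coeff x p \<noteq> 0" for p
    using that \<open>q0 \<in> F\<close> \<open>\<forall>p\<in>F. Min F \<le> p\<close> by (fastforce simp: F_def)
  ultimately show thesis
    by (intro that[of "Min F"]) (auto simp: F_def lc_vanishes_below_def not_le[symmetric])
qed

lemma lc_leading_exponent_unique:
  assumes "lc_coeff x q \<noteq> 0" "lc_vanishes_below q x" "lc_coeff x q' \<noteq> 0" "lc_vanishes_below q' x"
  shows "q = q'"
  using assms unfolding lc_vanishes_below_def by (metis linorder_neqE)

lemma lc_pos_iff_leading: "lc_pos x \<longleftrightarrow> (\<exists>q. 0 < lc_coeff x q \<and> lc_vanishes_below q x)"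
  unfolding lc_pos_def lc_vanishes_below_def by auto

lemma lc_pos_add:
  assumes "lc_pos x" "lc_pos y"
  shows "lc_pos (x + y)"
proof -
  obtain p q where "0 < lc_coeff x p" "lc_vanishes_below p x" "0 < lc_coeff y q" "lc_vanishes_below q y"
    using assms by (auto simp: lc_pos_iff_leading)
  hence "0 < lc_coeff (x + y) (min p q)" "lc_vanishes_below (min p q) (x + y)"
    by (auto simp: lc_vanishes_below_def min_def dest: spec[of _ p] spec[of _ q])
  thus ?thesis
    unfolding lc_pos_iff_leading by blast
qed

lemma lc_pos_or_pos_uminus: "x \<noteq> 0 \<Longrightarrow> lc_pos x \<or> lc_pos (- x)"
  by (elim lc_leading_exponent_exists) (auto simp: lc_pos_iff_leading lc_vanishes_below_def neq_iff)

lemma lc_not_pos_and_pos_uminus: "\<not> (lc_pos x \<and> lc_pos (- x))"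
proof
  assume "lc_pos x \<and> lc_pos (- x)"
  then obtain p q where "0 < lc_coeff x p" "lc_vanishes_below p x" "lc_coeff x q < 0" "lc_vanishes_below q x"
    by (auto simp: lc_pos_iff_leading)
  moreover from this have "p = q"
    by (intro lc_leading_exponent_unique[of x]) auto
  ultimately show False
    by simp
qed

instance lc :: linordered_ab_group_add
proof
  fix x y z :: lc
  note defs = less_eq_lc_def less_lc_def
  show "x < y \<longleftrightarrow> x \<le> y \<and> \<not> y \<le> x"
    using lc_not_pos_and_pos_uminus[of "y - x"] by (auto simp: defs lc_pos_def)
  show "x \<le> x"
    by (simp add: defs)
  show "x \<le> y \<Longrightarrow> y \<le> z \<Longrightarrow> x \<le> z"
    using lc_pos_add[of "z - y" "y - x"] by (auto simp: defs)
  show "x \<le> y \<Longrightarrow> y \<le> x \<Longrightarrow> x = y"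
    using lc_not_pos_and_pos_uminus[of "y - x"] by (auto simp: defs)
  show "x \<le> y \<or> y \<le> x"
    using lc_pos_or_pos_uminus[of "y - x"] by (auto simp: defs)
  show "x \<le> y \<Longrightarrow> z + x \<le> z + y"
    by (simp add: defs)
qed

lemma lc_zero_less_iff_leading: "0 < x \<longleftrightarrow> (\<exists>q. 0 < lc_coeff x q \<and> lc_vanishes_below q x)"
  by (simp add: less_lc_def lc_pos_iff_leading)

lemma lc_abs_less_iff: "\<bar>x :: lc\<bar> < e \<longleftrightarrow> x < e \<and> - x < e"
  by (auto simp: abs_lc_def intro: le_less_trans[of "- x" x]) (meson less_trans neg_0_less_iff_less)

lemma lc_pos_if_leading:
  "0 < lc_coeff x q \<Longrightarrow> lc_vanishes_below q x \<Longrightarrow> 0 < x"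
  unfolding lc_zero_less_iff_leading by blast

lemma lc_neg_if_leading:
  assumes "lc_coeff x q < 0" "lc_vanishes_below q x"
  shows "x < 0"
  using lc_pos_if_leading[of "- x" q] assms by simp

lemma lc_leading_coeff_pos:
  assumes "0 < x" "lc_coeff x q \<noteq> 0" "lc_vanishes_below q x"
  shows "0 < lc_coeff x q"
  using assms lc_neg_if_leading[of x q] by (cases "lc_coeff x q < 0") auto

instantiation lc :: real_vector
begin

lift_definition scaleR_lc :: "real \<Rightarrow> lc \<Rightarrow> lc" is "\<lambda>c x q. c * x q"
proof -
  fix c :: real and x :: "rat \<Rightarrow> real" and r :: rat
  assume "\<And>r. finite {q. x q \<noteq> 0 \<and> q < r}"
  thus "finite {q. c * x q \<noteq> 0 \<and> q < r}"
    by (rule rev_finite_subset) auto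
qed

lemma lc_coeff_scaleR [simp]: "lc_coeff (c *\<^sub>R x) q = c * lc_coeff x q"
  by transfer simp

instance
  by standard (auto intro!: lc_eqI simp: algebra_simps)

end

lemma lc_scaleR_pos: "0 < c \<Longrightarrow> 0 < x \<Longrightarrow> 0 < c *\<^sub>R (x :: lc)"
  unfolding lc_zero_less_iff_leading lc_vanishes_below_def using mult_pos_pos by fastforce

instance lc :: ordered_real_vector
proof
  have nonneg: "0 \<le> c *\<^sub>R x" if "0 \<le> c" "0 \<le> x" for c :: real and x :: lc
    using that lc_scaleR_pos[of c x] by (cases "c = 0 \<or> x = 0") (auto simp: order.order_iff_strict)
  fix x y :: lc and a b :: real
  show "x \<le> y \<Longrightarrow> 0 \<le> a \<Longrightarrow> a *\<^sub>R x \<le> a *\<^sub>R y"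
    using nonneg[of a "y - x"] by (simp add: scaleR_diff_right)
  show "a \<le> b \<Longrightarrow> 0 \<le> x \<Longrightarrow> a *\<^sub>R x \<le> b *\<^sub>R x"
    using nonneg[of "b - a" x] by (simp add: scaleR_diff_left)
qed

text \<open>\<open>lc_monomial q\<close> is \<open>d\<^sup>q\<close>, where \<open>d\<close> is the infinitesimal with a single coefficient \<open>1\<close> at exponent \<open>1\<close>.\<close>

lift_definition lc_monomial :: "rat \<Rightarrow> lc" is "\<lambda>r q. if q = r then 1 else 0"
  by (rule rev_finite_subset[of "{r}" for r]) auto

lemma lc_coeff_monomial [simp]: "lc_coeff (lc_monomial r) q = (if q = r then 1 else 0)"
  by transfer simp

lemma lc_monomial_pos: "0 < lc_monomial r"
  by (rule lc_pos_if_leading[of _ r]) (simp_all add: lc_vanishes_below_def)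

lemma lc_vanishes_below_monomial: "r \<le> s \<Longrightarrow> lc_vanishes_below r (lc_monomial s)"
  by (simp add: lc_vanishes_below_def)

lemma lc_less_if_vanishes_below:
  assumes "0 < lc_coeff e q" "lc_vanishes_below q e" "lc_vanishes_below r y" "q < r"
  shows "y < e"
  using lc_pos_if_leading[of "e - y" q] assms by (simp add: lc_vanishes_below_def)

lemma lc_vanishes_below_le:
  assumes "0 \<le> y" "y \<le> x" "lc_vanishes_below r x"
  shows "lc_vanishes_below r y"
proof (rule ccontr)
  assume "\<not> lc_vanishes_below r y"
  hence "y \<noteq> 0"
    by auto
  then obtain q where q: "lc_coeff y q \<noteq> 0" "lc_vanishes_below q y"
    by (rule lc_leading_exponent_exists)
  have "q < r"
    using q \<open>\<not> lc_vanishes_below r y\<close> lc_vanishes_below_mono not_less by blast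
  have "0 < lc_coeff y q"
    using assms(1) q \<open>y \<noteq> 0\<close> by (intro lc_leading_coeff_pos) auto
  hence "x - y < 0"
    using q \<open>q < r\<close> assms(3) by (intro lc_neg_if_leading[of _ q]) (auto simp: lc_vanishes_below_def)
  with assms(2) show False
    by simp
qed

lemma lc_vanishes_below_if_abs_less_monomial:
  assumes "\<bar>x\<bar> < lc_monomial r"
  shows "lc_vanishes_below r x"
proof -
  have "0 \<le> \<bar>x\<bar>"
    by (simp add: abs_lc_def not_less less_imp_le)
  hence "lc_vanishes_below r \<bar>x\<bar>"
    using assms by (auto intro: lc_vanishes_below_le[of _ "lc_monomial r"] lc_vanishes_below_monomial)
  thus ?thesis
    by (cases "x < 0") (auto simp: abs_lc_def)
qed

lemma lc_abs_less_if_vanishes_below: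
  assumes "0 < e"
  obtains r where "\<And>y. lc_vanishes_below r y \<Longrightarrow> \<bar>y\<bar> < e"
proof -
  obtain q where "0 < lc_coeff e q" "lc_vanishes_below q e"
    using assms lc_zero_less_iff_leading by blast
  with lc_less_if_vanishes_below[of e q "q + 1"] show thesis
    by (intro that[of "q + 1"]) (simp add: lc_abs_less_iff)
qed

section \<open>Limits and series\<close>

lemma lc_tendsto_iff_vanishes_below:
  "lc_tendsto a L \<longleftrightarrow> (\<forall>r. \<exists>N. \<forall>n\<ge>N. lc_vanishes_below r (a n - L))"
proof (intro iffI allI)
  fix r
  assume "lc_tendsto a L"
  then obtain N where "\<forall>n\<ge>N. \<bar>a n - L\<bar> < lc_monomial r"
    unfolding lc_tendsto_def using lc_monomial_pos by blast
  thus "\<exists>N. \<forall>n\<ge>N. lc_vanishes_below r (a n - L)"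
    using lc_vanishes_below_if_abs_less_monomial by blast
next
  assume vanishes: "\<forall>r. \<exists>N. \<forall>n\<ge>N. lc_vanishes_below r (a n - L)"
  show "lc_tendsto a L"
    unfolding lc_tendsto_def
  proof (intro allI impI)
    fix e :: lc
    assume "0 < e"
    then obtain r where "\<And>y. lc_vanishes_below r y \<Longrightarrow> \<bar>y\<bar> < e"
      using lc_abs_less_if_vanishes_below by blast
    thus "\<exists>N. \<forall>n\<ge>N. \<bar>a n - L\<bar> < e"
      using vanishes by blast
  qed
qed

lemma lc_tendsto_unique:
  assumes "lc_tendsto a L" "lc_tendsto a L'"
  shows "L = L'"
proof -
  have "lc_vanishes_below r (L' - L)" for r
  proof -
    obtain N where "\<forall>n\<ge>N. lc_vanishes_below r (a n - L) \<and> lc_vanishes_below r (a n - L')"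
      using assms unfolding lc_tendsto_iff_vanishes_below by (metis max.boundedE nle_le)
    hence "lc_vanishes_below r ((a N - L) - (a N - L'))"
      by (blast intro: lc_vanishes_below_diff)
    thus ?thesis
      by simp
  qed
  thus ?thesis
    using lc_eq_zero_if_vanishes_below[of "L' - L"] by simp
qed

lemma lc_tendsto_le_const:
  assumes "lc_tendsto a L" "\<And>n. a n \<le> x"
  shows "L \<le> x"
proof (rule ccontr)
  assume "\<not> L \<le> x"
  then obtain r where r: "\<And>y. lc_vanishes_below r y \<Longrightarrow> \<bar>y\<bar> < L - x"
    using lc_abs_less_if_vanishes_below[of "L - x"] by (auto simp: not_le)
  obtain N where "lc_vanishes_below r (a N - L)"
    using assms(1) unfolding lc_tendsto_iff_vanishes_below by blast
  hence "L - a N < L - x"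
    using r lc_abs_less_iff by fastforce
  hence "x < a N"
    by simp
  with assms(2) show False
    using not_le by blast
qed

lemma lc_sums_unique: "lc_sums a s \<Longrightarrow> lc_sums a t \<Longrightarrow> s = t"
  unfolding lc_sums_def by (rule lc_tendsto_unique)

lemma lc_suminf_eqI: "lc_sums a s \<Longrightarrow> lc_suminf a = s"
  unfolding lc_suminf_def by (blast intro: lc_sums_unique)

lemma lc_summable_sums: "lc_summable a \<Longrightarrow> lc_sums a (lc_suminf a)"
  unfolding lc_summable_def using lc_suminf_eqI by metis

lemma lc_psum_eq_sum: "lc_psum a n = (\<Sum>k<n. a k)"
  by (induction n) auto

lemma lc_psum_add: "lc_psum (\<lambda>n. a n + b n) n = lc_psum a n + lc_psum b n"
  by (simp add: lc_psum_eq_sum sum.distrib)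

lemma lc_sums_add:
  assumes "lc_sums a s" "lc_sums b t"
  shows "lc_sums (\<lambda>n. a n + b n) (s + t)"
  unfolding lc_sums_def lc_tendsto_iff_vanishes_below
proof
  fix r
  obtain N where "\<forall>n\<ge>N. lc_vanishes_below r (lc_psum a n - s) \<and> lc_vanishes_below r (lc_psum b n - t)"
    using assms unfolding lc_sums_def lc_tendsto_iff_vanishes_below by (metis max.boundedE nle_le)
  hence "\<forall>n\<ge>N. lc_vanishes_below r ((lc_psum a n - s) + (lc_psum b n - t))"
    by (blast intro: lc_vanishes_below_add)
  thus "\<exists>N. \<forall>n\<ge>N. lc_vanishes_below r (lc_psum (\<lambda>n. a n + b n) n - (s + t))"
    by (auto simp: lc_psum_add algebra_simps)
qed

lemma lc_cauchy_convergent: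
  assumes "\<forall>r. \<exists>N. \<forall>n\<ge>N. lc_vanishes_below r (s n - s N)"
  obtains L where "lc_tendsto s L"
proof -
  obtain N where N: "\<And>r n. N r \<le> n \<Longrightarrow> lc_vanishes_below r (s n - s (N r))"
    using assms by metis
  \<comment> \<open>The coefficients of \<open>s n\<close> below \<open>r\<close> are frozen from \<open>N r\<close> on; the limit collects them.\<close>
  have agree: "lc_coeff (s n) q = lc_coeff (s (N r)) q" if "N r \<le> n" "q < r" for n r q
    using N[OF that(1)] that(2) by (simp add: lc_vanishes_below_def)
  define f where "f q = lc_coeff (s (N (q + 1))) q" for q
  have f_eq: "f q = lc_coeff (s (N r)) q" if "q < r" for q r
    using agree[of r "max (N r) (N (q + 1))" q] agree[of "q + 1" "max (N r) (N (q + 1))" q] that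
    by (simp add: f_def)
  have "{q. f q \<noteq> 0 \<and> q < r} = {q. lc_coeff (s (N r)) q \<noteq> 0 \<and> q < r}" for r
    using f_eq by auto
  hence "finite {q. f q \<noteq> 0 \<and> q < r}" for r
    using lc_support_below_finite by metis
  hence coeff_L: "lc_coeff (Abs_lc f) = f"
    by (simp add: Abs_lc_inverse)
  have "lc_tendsto s (Abs_lc f)"
    unfolding lc_tendsto_iff_vanishes_below
  proof
    fix r
    show "\<exists>M. \<forall>n\<ge>M. lc_vanishes_below r (s n - Abs_lc f)"
      by (rule exI[of _ "N r"]) (simp add: lc_vanishes_below_def coeff_L f_eq agree)
  qed
  thus thesis
    by (rule that)
qed

lemma lc_psum_tail_vanishes_below:
  assumes "\<forall>n\<ge>N. lc_vanishes_below r (a n)" "N \<le> n"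
  shows "lc_vanishes_below r (lc_psum a n - lc_psum a N)"
proof -
  have "lc_psum a n - lc_psum a N = (\<Sum>k\<in>{N..<n}. a k)"
    using assms(2) by (simp add: lc_psum_eq_sum atLeast0LessThan[symmetric] sum_diff_nat_ivl)
  thus ?thesis
    using assms(1) by (auto intro!: lc_vanishes_below_sum)
qed

lemma lc_summable_iff_tendsto_zero: "lc_summable a \<longleftrightarrow> lc_tendsto a 0"
proof
  assume "lc_summable a"
  then obtain s where "lc_sums a s"
    unfolding lc_summable_def by blast
  hence "\<forall>r. \<exists>N. \<forall>n\<ge>N. lc_vanishes_below r ((lc_psum a (Suc n) - s) - (lc_psum a n - s))"
    unfolding lc_sums_def lc_tendsto_iff_vanishes_below by (meson le_SucI lc_vanishes_below_diff)
  thus "lc_tendsto a 0"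
    by (simp add: lc_tendsto_iff_vanishes_below)
next
  assume "lc_tendsto a 0"
  hence "\<forall>r. \<exists>N. \<forall>n\<ge>N. lc_vanishes_below r (lc_psum a n - lc_psum a N)"
    unfolding lc_tendsto_iff_vanishes_below by (metis diff_zero lc_psum_tail_vanishes_below)
  thus "lc_summable a"
    unfolding lc_summable_def lc_sums_def by (metis lc_cauchy_convergent)
qed

lemma lc_tendsto_zero_comparison:
  assumes "lc_tendsto g 0" "\<And>n. 0 \<le> f n" "\<And>n. f n \<le> g n"
  shows "lc_tendsto f 0"
  using assms lc_vanishes_below_le unfolding lc_tendsto_iff_vanishes_below by (metis diff_zero)

definition interleave :: "(nat \<Rightarrow> 'a) \<Rightarrow> (nat \<Rightarrow> 'a) \<Rightarrow> nat \<Rightarrow> 'a" where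
  "interleave f g n = (if even n then f (n div 2) else g (n div 2))"

lemma interleave_even [simp]: "interleave f g (2 * n) = f n"
  and interleave_odd [simp]: "interleave f g (Suc (2 * n)) = g n"
  by (simp_all add: interleave_def)

lemma interleave_map: "h (interleave f g n) = interleave (\<lambda>n. h (f n)) (\<lambda>n. h (g n)) n"
  by (simp add: interleave_def)

lemma lc_psum_interleave_even: "lc_psum (interleave f g) (2 * k) = lc_psum f k + lc_psum g k"
proof (induction k)
  case (Suc k)
  have "2 * Suc k = Suc (Suc (2 * k))"
    by simp
  thus ?case
    using Suc.IH interleave_even[of f g k] interleave_odd[of f g k] by (simp add: add_ac)
qed simp

lemma lc_psum_interleave_odd: "lc_psum (interleave f g) (2 * k + 1) = lc_psum f (Suc k) + lc_psum g k"
  by (simp add: lc_psum_interleave_even add_ac)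

lemma lc_sums_interleave:
  assumes "lc_sums f s" "lc_sums g t"
  shows "lc_sums (interleave f g) (s + t)"
  unfolding lc_sums_def lc_tendsto_iff_vanishes_below
proof
  fix r
  obtain N where N: "\<forall>n\<ge>N. lc_vanishes_below r (lc_psum f n - s) \<and> lc_vanishes_below r (lc_psum g n - t)"
    using assms unfolding lc_sums_def lc_tendsto_iff_vanishes_below by (metis max.boundedE nle_le)
  have "lc_vanishes_below r (lc_psum (interleave f g) n - (s + t))" if "2 * N \<le> n" for n
  proof (cases "even n")
    case True
    then obtain k where k: "n = 2 * k" "N \<le> k"
      using \<open>2 * N \<le> n\<close> by (auto elim: evenE)
    have "lc_vanishes_below r ((lc_psum f k - s) + (lc_psum g k - t))"
      using N k(2) by (blast intro: lc_vanishes_below_add)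
    thus ?thesis
      unfolding k(1) lc_psum_interleave_even by (simp add: algebra_simps)
  next
    case False
    then obtain k where k: "n = 2 * k + 1" "N \<le> k"
      using \<open>2 * N \<le> n\<close> by (auto elim: oddE)
    have "lc_vanishes_below r ((lc_psum f (Suc k) - s) + (lc_psum g k - t))"
      using N k(2) le_SucI by (blast intro: lc_vanishes_below_add)
    thus ?thesis
      unfolding k(1) lc_psum_interleave_odd by (simp add: algebra_simps)
  qed
  thus "\<exists>N. \<forall>n\<ge>N. lc_vanishes_below r (lc_psum (interleave f g) n - (s + t))"
    by blast
qed

section \<open>Truncation and a Heine--Borel lemma\<close>

lemma budget_after_leftmost_interval:
  fixes A B S g \<alpha>0 \<beta>0 :: "'a :: linordered_ab_group_add"
  assumes "(\<beta>0 - \<alpha>0 + g + S) + g \<le> B - A" "\<alpha>0 \<le> \<beta>0" "0 \<le> g" "\<alpha>0 < A + g"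
  shows "S + g \<le> B - max A \<beta>0"
proof (cases "A \<le> \<beta>0")
  case True
  have "S + g = ((\<beta>0 - \<alpha>0 + g + S) + g) - \<beta>0 + (\<alpha>0 - g)"
    by (simp add: algebra_simps)
  also have "\<dots> \<le> (B - A) - \<beta>0 + (\<alpha>0 - g)"
    using assms(1) by (intro add_right_mono diff_right_mono)
  also have "\<dots> \<le> (B - A) - \<beta>0 + A"
    using assms(4) by (simp add: diff_le_eq less_imp_le)
  finally show ?thesis
    using True by simp
next
  case False
  have "S + g \<le> (\<beta>0 - \<alpha>0 + g + S) + g"
    using assms(2,3) by (simp add: add_nonneg_nonneg)
  also have "\<dots> \<le> B - max A \<beta>0"
    using assms(1) False by simp
  finally show ?thesis .
qed

text \<open>Each interval costs its length plus \<open>g\<close>; the budget left over guarantees a gap of length \<open>g\<close>.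
  The induction removes the interval with the leftmost left endpoint.\<close>

lemma finite_intervals_gap:
  fixes \<alpha> \<beta> :: "'i \<Rightarrow> 'a :: linordered_ab_group_add"
  assumes "finite F" "\<And>i. i \<in> F \<Longrightarrow> \<alpha> i \<le> \<beta> i" "0 \<le> g"
    and "(\<Sum>i\<in>F. \<beta> i - \<alpha> i + g) + g \<le> B - A"
  shows "\<exists>x \<in> insert A (\<beta> ` F). A \<le> x \<and> x + g \<le> B \<and> (\<forall>i\<in>F. \<beta> i \<le> x \<or> x + g \<le> \<alpha> i)"
  using assms(1,2,4)
proof (induction "card F" arbitrary: F A)
  case 0
  thus ?case
    by (simp add: le_diff_eq add.commute)
next
  case (Suc k)
  have "Min (\<alpha> ` F) \<in> \<alpha> ` F"
    using Suc.hyps(2) Suc.prems(1) by (intro Min_in) auto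
  then obtain i0 where "i0 \<in> F" "\<alpha> i0 = Min (\<alpha> ` F)"
    by force
  hence i0: "i0 \<in> F" "\<And>i. i \<in> F \<Longrightarrow> \<alpha> i0 \<le> \<alpha> i"
    using Suc.prems(1) by simp_all
  show ?case
  proof (cases "A + g \<le> \<alpha> i0")
    case True
    have "A + g \<le> A + ((\<Sum>i\<in>F. \<beta> i - \<alpha> i + g) + g)"
      using Suc.prems(2) \<open>0 \<le> g\<close> by (simp add: sum_nonneg add_nonneg_nonneg)
    also have "\<dots> \<le> B"
      using Suc.prems(3) by (simp add: le_diff_eq add.commute)
    finally show ?thesis
      using True i0 by (auto intro: order.trans)
  next
    case False
    define F' where "F' = F - {i0}"
    define A' where "A' = max A (\<beta> i0)"
    have "card F' = k" "finite F'" "\<And>i. i \<in> F' \<Longrightarrow> \<alpha> i \<le> \<beta> i"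
      using Suc.hyps(2) Suc.prems(1,2) i0(1) by (auto simp: F'_def)
    moreover have "(\<Sum>i\<in>F'. \<beta> i - \<alpha> i + g) + g \<le> B - A'"
    proof -
      have "(\<Sum>i\<in>F. \<beta> i - \<alpha> i + g) = \<beta> i0 - \<alpha> i0 + g + (\<Sum>i\<in>F'. \<beta> i - \<alpha> i + g)"
        using Suc.prems(1) i0(1) unfolding F'_def by (rule sum.remove)
      thus ?thesis
        using Suc.prems(2,3) i0(1) False \<open>0 \<le> g\<close> unfolding A'_def
        by (intro budget_after_leftmost_interval) (auto simp: not_le)
    qed
    ultimately obtain x where x: "x \<in> insert A' (\<beta> ` F')" "A' \<le> x" "x + g \<le> B"
        "\<forall>i\<in>F'. \<beta> i \<le> x \<or> x + g \<le> \<alpha> i"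
      using Suc.hyps(1) by blast
    hence "x \<in> insert A (\<beta> ` F)" "A \<le> x" "\<forall>i\<in>F. \<beta> i \<le> x \<or> x + g \<le> \<alpha> i"
      using i0(1) by (auto simp: A'_def F'_def max_def split: if_splits)
    thus ?thesis
      using x(3) by blast
  qed
qed

lift_definition lc_trunc :: "rat \<Rightarrow> lc \<Rightarrow> lc" is "\<lambda>r x q. if q \<le> r then x q else 0"
proof -
  fix r s :: rat and x :: "rat \<Rightarrow> real"
  assume "\<And>r. finite {q. x q \<noteq> 0 \<and> q < r}"
  thus "finite {q. (if q \<le> r then x q else 0) \<noteq> 0 \<and> q < s}"
    by (rule rev_finite_subset) auto
qed

lemma lc_coeff_trunc [simp]: "lc_coeff (lc_trunc r x) q = (if q \<le> r then lc_coeff x q else 0)"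
  by transfer simp

lemma lc_trunc_zero [simp]: "lc_trunc r 0 = 0"
  and lc_trunc_add: "lc_trunc r (x + y) = lc_trunc r x + lc_trunc r y"
  and lc_trunc_diff: "lc_trunc r (x - y) = lc_trunc r x - lc_trunc r y"
  and lc_trunc_scaleR: "lc_trunc r (c *\<^sub>R x) = c *\<^sub>R lc_trunc r x"
  and lc_trunc_trunc [simp]: "lc_trunc r (lc_trunc r x) = lc_trunc r x"
  and lc_trunc_monomial [simp]: "lc_trunc r (lc_monomial r) = lc_monomial r"
  by (auto intro!: lc_eqI)

lemma lc_trunc_sum: "lc_trunc r (sum f F) = (\<Sum>i\<in>F. lc_trunc r (f i))"
  by (induction F rule: infinite_finite_induct) (auto simp: lc_trunc_add intro: lc_eqI)

lemma lc_trunc_eq_zero_if_vanishes_below: "lc_vanishes_below s x \<Longrightarrow> r < s \<Longrightarrow> lc_trunc r x = 0"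
  by (rule lc_eqI) (auto simp: lc_vanishes_below_def)

lemma lc_trunc_nonneg:
  assumes "0 \<le> x"
  shows "0 \<le> lc_trunc r x"
proof (cases "x = 0")
  case False
  with assms obtain q where q: "0 < lc_coeff x q" "lc_vanishes_below q x"
    using lc_zero_less_iff_leading[of x] by (auto simp: order.order_iff_strict)
  show ?thesis
  proof (cases "q \<le> r")
    case True
    with q show ?thesis
      using lc_pos_if_leading[of "lc_trunc r x" q] by (simp add: lc_vanishes_below_def)
  next
    case False
    with q have "lc_trunc r x = 0"
      by (intro lc_trunc_eq_zero_if_vanishes_below[of q]) auto
    thus ?thesis
      by simp
  qed
qed simp

lemma lc_trunc_mono: "x \<le> y \<Longrightarrow> lc_trunc r x \<le> lc_trunc r y"
  using lc_trunc_nonneg[of "y - x" r] by (simp add: lc_trunc_diff)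

lemma lc_less_if_trunc_less: "lc_trunc r x < lc_trunc r y \<Longrightarrow> x < y"
  using lc_trunc_mono[of y x r] by (meson leD leI)

lemma lc_trunc_at_leading_exponent:
  "lc_vanishes_below q x \<Longrightarrow> lc_trunc q x = lc_coeff x q *\<^sub>R lc_monomial q"
  by (rule lc_eqI) (auto simp: lc_vanishes_below_def)

lemma lc_trunc_sums:
  assumes "lc_sums l \<sigma>"
  obtains N where "\<And>m. N \<le> m \<Longrightarrow> lc_trunc q (l m) = 0"
    "lc_trunc q \<sigma> = (\<Sum>m<N. lc_trunc q (l m))"
proof -
  have "lc_tendsto l 0"
    using assms lc_summable_iff_tendsto_zero lc_summable_def by blast
  then obtain N where N: "\<And>m. N \<le> m \<Longrightarrow> lc_vanishes_below (q + 1) (l m)"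
    unfolding lc_tendsto_iff_vanishes_below by fastforce
  obtain M0 where "\<forall>n\<ge>M0. lc_vanishes_below (q + 1) (lc_psum l n - \<sigma>)"
    using assms unfolding lc_sums_def lc_tendsto_iff_vanishes_below by blast
  hence M: "lc_vanishes_below (q + 1) (lc_psum l (max M0 N) - \<sigma>)"
    by simp
  define M where "M = max M0 N"
  have "lc_vanishes_below (q + 1) ((lc_psum l M - lc_psum l N) - (lc_psum l M - \<sigma>))"
    by (rule lc_vanishes_below_diff[OF lc_psum_tail_vanishes_below]) (use N M in \<open>auto simp: M_def\<close>)
  hence "lc_trunc q (\<sigma> - lc_psum l N) = 0"
    by (intro lc_trunc_eq_zero_if_vanishes_below[of "q + 1"]) auto
  hence "lc_trunc q \<sigma> = (\<Sum>m<N. lc_trunc q (l m))"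
    by (simp add: lc_trunc_diff lc_trunc_sum lc_psum_eq_sum)
  moreover have "\<And>m. N \<le> m \<Longrightarrow> lc_trunc q (l m) = 0"
    using N by (intro lc_trunc_eq_zero_if_vanishes_below[of "q + 1"]) auto
  ultimately show thesis
    using that by blast
qed

lemma lc_truncated_point_avoiding_countable:
  assumes "lc_trunc q x = x" "0 < \<kappa>" "countable Z"
  obtains z where "lc_trunc q z = z" "x < z" "z < x + \<kappa> *\<^sub>R lc_monomial q" "z \<notin> Z"
proof -
  define f where "f s = x + s *\<^sub>R lc_monomial q" for s
  have "inj_on f {0<..<\<kappa>}"
    by (rule inj_onI) (drule arg_cong[of _ _ "\<lambda>y. lc_coeff y q"], simp add: f_def)
  hence "uncountable (f ` {0<..<\<kappa>})"
    using \<open>0 < \<kappa>\<close> uncountable_open_interval countable_image_inj_on by blast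
  hence "\<not> f ` {0<..<\<kappa>} \<subseteq> Z"
    using \<open>countable Z\<close> countable_subset by blast
  then obtain s where s: "s \<in> {0<..<\<kappa>}" "f s \<notin> Z"
    by blast
  have "0 < s *\<^sub>R lc_monomial q" "0 < (\<kappa> - s) *\<^sub>R lc_monomial q"
    using s lc_scaleR_pos lc_monomial_pos by auto
  hence "x < f s" "f s < x + \<kappa> *\<^sub>R lc_monomial q"
    by (auto simp: f_def algebra_simps)
  moreover have "lc_trunc q (f s) = f s"
    using assms(1) by (simp add: f_def lc_trunc_add lc_trunc_scaleR)
  ultimately show thesis
    using that s(2) by blast
qed

text \<open>Covers by possibly degenerate closed intervals with the sum of lengths recorded. Unlike
  \<open>lc_cover\<close>, they survive clamping the intervals at given endpoints.\<close>

definition lc_closed_cover :: "lc set \<Rightarrow> (nat \<Rightarrow> lc) \<Rightarrow> (nat \<Rightarrow> lc) \<Rightarrow> lc \<Rightarrow> bool" where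
  "lc_closed_cover X \<alpha> \<beta> \<sigma> \<longleftrightarrow>
     (\<forall>m. \<alpha> m \<le> \<beta> m) \<and> X \<subseteq> (\<Union>m. {\<alpha> m..\<beta> m}) \<and> lc_sums (\<lambda>m. \<beta> m - \<alpha> m) \<sigma>"

lemma lc_closed_cover_subset: "lc_closed_cover X \<alpha> \<beta> \<sigma> \<Longrightarrow> Y \<subseteq> X \<Longrightarrow> lc_closed_cover Y \<alpha> \<beta> \<sigma>"
  unfolding lc_closed_cover_def by blast

lemma lc_closed_cover_memE:
  assumes "lc_closed_cover X \<alpha> \<beta> \<sigma>" "x \<in> X"
  obtains m where "\<alpha> m \<le> x" "x \<le> \<beta> m"
proof -
  have "x \<in> (\<Union>m. {\<alpha> m..\<beta> m})"
    using assms unfolding lc_closed_cover_def by blast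
  then obtain m where "x \<in> {\<alpha> m..\<beta> m}"
    by (rule UN_E)
  thus thesis
    using that[of m] by simp
qed

lemma lc_truncated_cover_gap:
  assumes sums: "lc_sums (\<lambda>m. \<beta> m - \<alpha> m) \<sigma>" and ord: "\<And>m. \<alpha> m \<le> \<beta> m"
    and q: "0 < lc_coeff (b - a - \<sigma>) q" "lc_vanishes_below q (b - a - \<sigma>)"
  defines "T \<equiv> lc_trunc q"
  obtains \<kappa> N x where "0 < \<kappa>" "\<And>m. N \<le> m \<Longrightarrow> T (\<beta> m) = T (\<alpha> m)" "T x = x" "T a \<le> x"
    "x + \<kappa> *\<^sub>R lc_monomial q \<le> T b" "\<And>m. m < N \<Longrightarrow> T (\<beta> m) \<le> x \<or> x + \<kappa> *\<^sub>R lc_monomial q \<le> T (\<alpha> m)"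
proof -
  obtain N where N: "\<And>m. N \<le> m \<Longrightarrow> T (\<beta> m) = T (\<alpha> m)" "T \<sigma> = (\<Sum>m<N. T (\<beta> m) - T (\<alpha> m))"
    using lc_trunc_sums[OF sums, of q] unfolding T_def lc_trunc_diff by (metis right_minus_eq)
  define \<kappa> where "\<kappa> = lc_coeff (b - a - \<sigma>) q / (N + 1)"
  define g where "g = \<kappa> *\<^sub>R lc_monomial q"
  have "0 < \<kappa>"
    using q(1) by (simp add: \<kappa>_def)
  hence "0 < g"
    by (simp add: g_def lc_scaleR_pos lc_monomial_pos)
  have "T b - T a = T \<sigma> + (N + 1) *\<^sub>R g"
    using lc_trunc_at_leading_exponent[OF q(2)]
    by (simp add: T_def g_def \<kappa>_def lc_trunc_diff diff_eq_eq add.commute)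
  also have "\<dots> = (\<Sum>m<N. T (\<beta> m) - T (\<alpha> m) + g) + g"
    unfolding sum.distrib sum_constant_scaleR by (simp add: N(2) scaleR_add_left algebra_simps)
  finally have "(\<Sum>m<N. T (\<beta> m) - T (\<alpha> m) + g) + g \<le> T b - T a"
    by simp
  hence "\<exists>x \<in> insert (T a) ((\<lambda>m. T (\<beta> m)) ` {..<N}). T a \<le> x \<and> x + g \<le> T b \<and>
      (\<forall>m\<in>{..<N}. T (\<beta> m) \<le> x \<or> x + g \<le> T (\<alpha> m))"
    using ord \<open>0 < g\<close> by (intro finite_intervals_gap) (auto simp: T_def lc_trunc_mono)
  then obtain x where x: "x \<in> insert (T a) ((\<lambda>m. T (\<beta> m)) ` {..<N})" "T a \<le> x" "x + g \<le> T b"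
      "\<forall>m\<in>{..<N}. T (\<beta> m) \<le> x \<or> x + g \<le> T (\<alpha> m)"
    by blast
  from x(1) have "T x = x"
    by (auto simp: T_def)
  from that[OF \<open>0 < \<kappa>\<close> N(1) this x(2)] x(3,4) show thesis
    by (simp add: g_def)
qed

lemma lc_closed_cover_length_ge:
  assumes "a < b" "lc_closed_cover {a<..<b} \<alpha> \<beta> \<sigma>"
  shows "b - a \<le> \<sigma>"
proof (rule ccontr)
  have ord: "\<And>m. \<alpha> m \<le> \<beta> m" and sums: "lc_sums (\<lambda>m. \<beta> m - \<alpha> m) \<sigma>"
    using assms(2) unfolding lc_closed_cover_def by auto
  assume "\<not> b - a \<le> \<sigma>"
  then obtain q where q: "0 < lc_coeff (b - a - \<sigma>) q" "lc_vanishes_below q (b - a - \<sigma>)"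
    using lc_zero_less_iff_leading[of "b - a - \<sigma>"] by (auto simp: not_le)
  define T where "T = lc_trunc q"
  obtain \<kappa> N x where "0 < \<kappa>" and N: "\<And>m. N \<le> m \<Longrightarrow> T (\<beta> m) = T (\<alpha> m)"
    and x: "T x = x" "T a \<le> x" "x + \<kappa> *\<^sub>R lc_monomial q \<le> T b"
      "\<And>m. m < N \<Longrightarrow> T (\<beta> m) \<le> x \<or> x + \<kappa> *\<^sub>R lc_monomial q \<le> T (\<alpha> m)"
    by (rule lc_truncated_cover_gap[OF sums ord q, folded T_def]) (rule that)
  have "countable (range (\<lambda>m. T (\<alpha> m)))"
    by simp
  then obtain z where z: "T z = z" "x < z" "z < x + \<kappa> *\<^sub>R lc_monomial q" "z \<notin> range (\<lambda>m. T (\<alpha> m))"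
    by (rule lc_truncated_point_avoiding_countable[OF x(1)[unfolded T_def] \<open>0 < \<kappa>\<close>, folded T_def]) (rule that)
  have "T a < T z" "T z < T b"
    using x(2,3) z(1-3) by auto
  hence "z \<in> {a<..<b}"
    by (simp add: T_def lc_less_if_trunc_less)
  with assms(2) obtain m where "\<alpha> m \<le> z" "z \<le> \<beta> m"
    by (rule lc_closed_cover_memE)
  hence m: "T (\<alpha> m) \<le> z" "z \<le> T (\<beta> m)"
    using z(1) lc_trunc_mono unfolding T_def by metis+
  show False
  proof (cases "m < N")
    case True
    thus False
      using x(4)[OF True] m z(2,3) by (meson leD order.trans le_less_trans)
  next
    case False
    thus False
      using N[of m] m z(4) by (simp add: order.antisym)
  qed
qed

section \<open>Intervals, covers and the outer measure of a union\<close>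

instance lc :: dense_linorder
proof
  fix x y :: lc
  assume "x < y"
  hence "0 < (1 / 2 :: real) *\<^sub>R (y - x)"
    by (simp add: lc_scaleR_pos)
  moreover have "y - (x + (1 / 2 :: real) *\<^sub>R (y - x)) = (1 / 2 :: real) *\<^sub>R (y - x)"
    by (simp add: algebra_simps flip: scaleR_2)
  ultimately show "\<exists>z. x < z \<and> z < y"
    by (metis diff_gt_0_iff_gt less_add_same_cancel1)
qed

lemma lc_interval_ab_bounds:
  assumes "lc_interval_ab a b S"
  shows "a < b" "{a<..<b} \<subseteq> S" "S \<subseteq> {a..b}"
  using assms unfolding lc_interval_ab_def by auto

lemma lc_interval_ab_unique:
  assumes "lc_interval_ab a b S" "lc_interval_ab a' b' S"
  shows "a = a' \<and> b = b'"
  using lc_interval_ab_bounds[OF assms(1)] lc_interval_ab_bounds[OF assms(2)]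
    greaterThanLessThan_subseteq_atLeastAtMost_iff[of a b a' b']
    greaterThanLessThan_subseteq_atLeastAtMost_iff[of a' b' a b]
  by (meson order.antisym order.trans)

lemma lc_len_eq:
  assumes "lc_interval_ab a b S"
  shows "lc_len S = b - a"
  unfolding lc_len_def using assms lc_interval_ab_unique by blast

lemma lc_cover_sums_closed_cover:
  assumes "y \<in> lc_cover_sums X"
  obtains \<alpha> \<beta> where "lc_closed_cover X \<alpha> \<beta> y"
proof -
  obtain S where cover: "lc_cover X S" and y: "y = lc_suminf (\<lambda>n. lc_len (S n))"
    using assms unfolding lc_cover_sums_def by blast
  have "\<forall>m. \<exists>a b. lc_interval_ab a b (S m)"
    using cover unfolding lc_cover_def lc_interval_def by blast
  then obtain \<alpha> \<beta> where ab: "\<And>m. lc_interval_ab (\<alpha> m) (\<beta> m) (S m)"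
    by metis
  have "lc_sums (\<lambda>m. lc_len (S m)) y"
    using cover by (simp add: y lc_cover_def lc_summable_sums)
  hence "lc_sums (\<lambda>m. \<beta> m - \<alpha> m) y"
    by (simp add: lc_len_eq[OF ab])
  moreover have "X \<subseteq> (\<Union>m. {\<alpha> m..\<beta> m})"
    using cover lc_interval_ab_bounds(3)[OF ab] unfolding lc_cover_def by blast
  moreover have "\<And>m. \<alpha> m \<le> \<beta> m"
    using lc_interval_ab_bounds(1)[OF ab] by (simp add: less_imp_le)
  ultimately show thesis
    by (intro that[of \<alpha> \<beta>]) (simp add: lc_closed_cover_def)
qed

lemma lc_closed_cover_widen:
  assumes "lc_closed_cover X \<alpha> \<beta> \<sigma>" "lc_sums \<epsilon> E" "\<And>m. 0 \<le> \<epsilon> m"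
  shows "lc_closed_cover X \<alpha> (\<lambda>m. \<beta> m + \<epsilon> m) (\<sigma> + E)"
proof -
  have "X \<subseteq> (\<Union>m. {\<alpha> m..\<beta> m + \<epsilon> m})"
  proof
    fix x
    assume "x \<in> X"
    with assms(1) obtain m where "\<alpha> m \<le> x" "x \<le> \<beta> m"
      by (rule lc_closed_cover_memE)
    thus "x \<in> (\<Union>m. {\<alpha> m..\<beta> m + \<epsilon> m})"
      using assms(3)[of m] by (intro UN_I[of m]) (simp_all add: add_increasing2)
  qed
  moreover have "lc_sums (\<lambda>m. (\<beta> m - \<alpha> m) + \<epsilon> m) (\<sigma> + E)"
    using assms(1,2) by (intro lc_sums_add) (simp_all add: lc_closed_cover_def)
  ultimately show ?thesis
    using assms(1,3) by (simp add: lc_closed_cover_def add_increasing2 algebra_simps)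
qed

lemma lc_cover_sums_if_closed_cover:
  assumes "lc_closed_cover X \<alpha> \<beta> \<sigma>" "\<And>m. \<alpha> m < \<beta> m"
  shows "\<sigma> \<in> lc_cover_sums X"
proof -
  have ab: "lc_interval_ab (\<alpha> m) (\<beta> m) {\<alpha> m..\<beta> m}" for m
    using assms(2) by (simp add: lc_interval_ab_def)
  hence sums: "lc_sums (\<lambda>m. lc_len {\<alpha> m..\<beta> m}) \<sigma>"
    using assms(1) by (simp add: lc_len_eq[OF ab] lc_closed_cover_def)
  hence "lc_cover X (\<lambda>m. {\<alpha> m..\<beta> m})"
    using assms(1) ab unfolding lc_cover_def lc_closed_cover_def lc_interval_def lc_summable_def by blast
  thus ?thesis
    using lc_suminf_eqI[OF sums] unfolding lc_cover_sums_def by force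
qed

lemma lc_positive_sums_below:
  assumes "0 < e"
  obtains \<epsilon> E where "\<And>m. 0 < \<epsilon> m" "lc_sums \<epsilon> E" "E < e"
proof -
  obtain q where q: "0 < lc_coeff e q" "lc_vanishes_below q e"
    using assms lc_zero_less_iff_leading by blast
  define \<epsilon> where "\<epsilon> m = lc_monomial (q + 1 + of_nat m)" for m
  have "lc_tendsto \<epsilon> 0"
    unfolding lc_tendsto_iff_vanishes_below
  proof
    fix r
    obtain N :: nat where N: "r - q - 1 < of_nat N"
      using reals_Archimedean2 by blast
    have "r \<le> q + 1 + of_nat n" if "N \<le> n" for n
      using N of_nat_mono[OF that, where ?'a = rat] by linarith
    hence "\<forall>n\<ge>N. lc_vanishes_below r (\<epsilon> n - 0)"
      by (simp add: \<epsilon>_def lc_vanishes_below_monomial)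
    thus "\<exists>N. \<forall>n\<ge>N. lc_vanishes_below r (\<epsilon> n - 0)"
      by blast
  qed
  then obtain E where E: "lc_sums \<epsilon> E"
    using lc_summable_iff_tendsto_zero lc_summable_def by blast
  then obtain N where "lc_vanishes_below (q + 1) (lc_psum \<epsilon> N - E)"
    unfolding lc_sums_def lc_tendsto_iff_vanishes_below by blast
  moreover have "lc_vanishes_below (q + 1) (lc_psum \<epsilon> N)"
    by (auto simp: lc_psum_eq_sum \<epsilon>_def intro!: lc_vanishes_below_sum lc_vanishes_below_monomial)
  ultimately have "lc_vanishes_below (q + 1) (lc_psum \<epsilon> N - (lc_psum \<epsilon> N - E))"
    by (rule lc_vanishes_below_diff[rotated])
  hence "E < e"
    using lc_less_if_vanishes_below[OF q, of "q + 1"] by simp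
  moreover have "\<And>m. 0 < \<epsilon> m"
    by (simp add: \<epsilon>_def lc_monomial_pos)
  ultimately show thesis
    using E that by blast
qed

lemma lc_inf_le_closed_cover_sum:
  assumes "lc_is_inf M (lc_cover_sums A)" "lc_closed_cover A \<alpha> \<beta> \<sigma>"
  shows "M \<le> \<sigma>"
proof (rule ccontr)
  assume "\<not> M \<le> \<sigma>"
  then obtain \<epsilon> E where \<epsilon>: "\<And>m. 0 < \<epsilon> m" "lc_sums \<epsilon> E" "E < M - \<sigma>"
    using lc_positive_sums_below[of "M - \<sigma>"] by (auto simp: not_le)
  have "lc_closed_cover A \<alpha> (\<lambda>m. \<beta> m + \<epsilon> m) (\<sigma> + E)"
    using assms(2) \<epsilon>(2) \<epsilon>(1)[THEN less_imp_le] by (rule lc_closed_cover_widen)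
  moreover have "\<alpha> m < \<beta> m + \<epsilon> m" for m
    using assms(2) add_strict_increasing[OF \<epsilon>(1)] by (simp add: lc_closed_cover_def add.commute)
  ultimately have "\<sigma> + E \<in> lc_cover_sums A"
    by (rule lc_cover_sums_if_closed_cover)
  hence "M \<le> \<sigma> + E"
    using assms(1) by (simp add: lc_is_inf_def)
  moreover have "\<sigma> + E < M"
    using \<epsilon>(3) by (simp add: less_diff_eq add.commute)
  ultimately show False
    by simp
qed

lemma min_max_clamp_sum:
  fixes x a b :: "'a :: linordered_ab_group_add"
  assumes "a \<le> b"
  shows "min x a + max a (min x b) + max x b = x + a + b"
  using assms by (cases "x \<le> a"; cases "x \<le> b") (auto simp: min_def max_def algebra_simps)

lemma lc_sums_split:
  assumes "lc_sums (\<lambda>n. f n + g n) \<sigma>" "\<And>n. 0 \<le> f n" "\<And>n. 0 \<le> g n"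
  obtains s t where "lc_sums f s" "lc_sums g t" "\<sigma> = s + t"
proof -
  have "lc_tendsto (\<lambda>n. f n + g n) 0"
    using assms(1) lc_summable_iff_tendsto_zero lc_summable_def by blast
  hence "lc_summable f" "lc_summable g"
    using assms(2,3) by (auto simp: lc_summable_iff_tendsto_zero intro: lc_tendsto_zero_comparison)
  then obtain s t where "lc_sums f s" "lc_sums g t"
    unfolding lc_summable_def by blast
  moreover from this have "\<sigma> = s + t"
    using assms(1) lc_sums_add lc_sums_unique by blast
  ultimately show thesis
    by (rule that)
qed

lemma lc_closed_cover_sums_split:
  assumes cover: "lc_closed_cover X \<alpha> \<beta> \<sigma>" and mono: "mono f" "mono g" "mono h"
    and split: "\<And>x. f x + (g x + h x) = x + c"
  obtains s t u where "lc_sums (\<lambda>m. f (\<beta> m) - f (\<alpha> m)) s" "lc_sums (\<lambda>m. g (\<beta> m) - g (\<alpha> m)) t"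
    "lc_sums (\<lambda>m. h (\<beta> m) - h (\<alpha> m)) u" "\<sigma> = s + (t + u)"
proof -
  have nonneg: "0 \<le> k (\<beta> m) - k (\<alpha> m)" if "mono k" for k :: "lc \<Rightarrow> lc" and m
    using cover monoD[OF that] by (simp add: lc_closed_cover_def)
  have "\<beta> m - \<alpha> m = (f (\<beta> m) - f (\<alpha> m)) + ((g (\<beta> m) - g (\<alpha> m)) + (h (\<beta> m) - h (\<alpha> m)))" for m
    using split[of "\<alpha> m"] split[of "\<beta> m"] by (simp add: algebra_simps)
  hence "lc_sums (\<lambda>m. (f (\<beta> m) - f (\<alpha> m)) + ((g (\<beta> m) - g (\<alpha> m)) + (h (\<beta> m) - h (\<alpha> m)))) \<sigma>"
    using cover by (simp add: lc_closed_cover_def)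
  then obtain s v where "lc_sums (\<lambda>m. f (\<beta> m) - f (\<alpha> m)) s" "\<sigma> = s + v"
      "lc_sums (\<lambda>m. (g (\<beta> m) - g (\<alpha> m)) + (h (\<beta> m) - h (\<alpha> m))) v"
    by (rule lc_sums_split[OF _ nonneg[OF mono(1)] add_nonneg_nonneg[OF nonneg[OF mono(2)] nonneg[OF mono(3)]]])
  moreover from this(3) obtain t u where "lc_sums (\<lambda>m. g (\<beta> m) - g (\<alpha> m)) t"
      "lc_sums (\<lambda>m. h (\<beta> m) - h (\<alpha> m)) u" "v = t + u"
    by (rule lc_sums_split[OF _ nonneg[OF mono(2)] nonneg[OF mono(3)]])
  ultimately show thesis
    using that by blast
qed

lemma lc_closed_cover_mono_image:
  assumes cover: "lc_closed_cover X \<alpha> \<beta> \<sigma>" and "mono f" "lc_sums (\<lambda>m. f (\<beta> m) - f (\<alpha> m)) s"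
  shows "lc_closed_cover {x \<in> X. f x = x} (\<lambda>m. f (\<alpha> m)) (\<lambda>m. f (\<beta> m)) s"
proof -
  have "{x \<in> X. f x = x} \<subseteq> (\<Union>m. {f (\<alpha> m)..f (\<beta> m)})"
  proof
    fix x
    assume "x \<in> {x \<in> X. f x = x}"
    hence "x \<in> X" "f x = x"
      by simp_all
    from cover \<open>x \<in> X\<close> obtain m where "\<alpha> m \<le> x" "x \<le> \<beta> m"
      by (rule lc_closed_cover_memE)
    hence "f (\<alpha> m) \<le> x" "x \<le> f (\<beta> m)"
      using monoD[OF \<open>mono f\<close>] \<open>f x = x\<close> by metis+
    thus "x \<in> (\<Union>m. {f (\<alpha> m)..f (\<beta> m)})"
      by (intro UN_I[of m]) simp_all
  qed
  thus ?thesis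
    using cover monoD[OF \<open>mono f\<close>] assms(3) by (simp add: lc_closed_cover_def)
qed

lemma lc_closed_cover_union:
  assumes "lc_closed_cover X \<alpha> \<beta> \<sigma>" "lc_closed_cover Y \<alpha>' \<beta>' \<sigma>'"
  shows "lc_closed_cover (X \<union> Y) (interleave \<alpha> \<alpha>') (interleave \<beta> \<beta>') (\<sigma> + \<sigma>')"
proof -
  have "(\<lambda>n. interleave \<beta> \<beta>' n - interleave \<alpha> \<alpha>' n) = interleave (\<lambda>m. \<beta> m - \<alpha> m) (\<lambda>m. \<beta>' m - \<alpha>' m)"
    by (simp add: interleave_def fun_eq_iff)
  hence "lc_sums (\<lambda>n. interleave \<beta> \<beta>' n - interleave \<alpha> \<alpha>' n) (\<sigma> + \<sigma>')"
    using assms lc_sums_interleave by (simp add: lc_closed_cover_def)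
  moreover have "interleave \<alpha> \<alpha>' n \<le> interleave \<beta> \<beta>' n" for n
    using assms by (simp add: interleave_def lc_closed_cover_def)
  moreover have "X \<union> Y \<subseteq> (\<Union>n. {interleave \<alpha> \<alpha>' n..interleave \<beta> \<beta>' n})"
  proof
    fix x
    assume "x \<in> X \<union> Y"
    thus "x \<in> (\<Union>n. {interleave \<alpha> \<alpha>' n..interleave \<beta> \<beta>' n})"
    proof
      assume "x \<in> X"
      with assms(1) obtain m where "\<alpha> m \<le> x" "x \<le> \<beta> m"
        by (rule lc_closed_cover_memE)
      thus ?thesis
        by (intro UN_I[of "2 * m"]) simp_all
    next
      assume "x \<in> Y"
      with assms(2) obtain m where "\<alpha>' m \<le> x" "x \<le> \<beta>' m"
        by (rule lc_closed_cover_memE)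
      thus ?thesis
        by (intro UN_I[of "Suc (2 * m)"]) simp_all
    qed
  qed
  ultimately show ?thesis
    by (simp add: lc_closed_cover_def)
qed

lemma lc_closed_cover_remove_interval:
  assumes cover: "lc_closed_cover X \<alpha> \<beta> \<sigma>" and "Y \<union> {a<..<b} \<subseteq> X" "Y \<inter> {a<..<b} = {}" "a < b"
  obtains \<alpha>' \<beta>' \<sigma>' where "lc_closed_cover Y \<alpha>' \<beta>' \<sigma>'" "\<sigma>' + (b - a) \<le> \<sigma>"
proof -
  define lo where "lo x = min x a" for x
  define mid where "mid x = max a (min x b)" for x
  define hi where "hi x = max x b" for x
  have mono: "mono lo" "mono mid" "mono hi"
    unfolding lo_def mid_def hi_def by (auto intro!: monoI min.mono max.mono)
  have "lo x + (mid x + hi x) = x + (a + b)" for x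
    using min_max_clamp_sum[of a b x] \<open>a < b\<close> by (simp add: lo_def mid_def hi_def add.assoc)
  then obtain sL sM sR where sL: "lc_sums (\<lambda>m. lo (\<beta> m) - lo (\<alpha> m)) sL"
    and sM: "lc_sums (\<lambda>m. mid (\<beta> m) - mid (\<alpha> m)) sM" and sR: "lc_sums (\<lambda>m. hi (\<beta> m) - hi (\<alpha> m)) sR"
    and \<sigma>: "\<sigma> = sL + (sM + sR)"
    by (rule lc_closed_cover_sums_split[OF cover mono])
  have "{a<..<b} \<subseteq> {x \<in> X. mid x = x}"
    using assms(2) by (auto simp: mid_def)
  with lc_closed_cover_mono_image[OF cover mono(2) sM]
  have "lc_closed_cover {a<..<b} (\<lambda>m. mid (\<alpha> m)) (\<lambda>m. mid (\<beta> m)) sM"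
    by (rule lc_closed_cover_subset)
  hence "b - a \<le> sM"
    by (rule lc_closed_cover_length_ge[OF \<open>a < b\<close>])
  have "lc_closed_cover ({x \<in> X. lo x = x} \<union> {x \<in> X. hi x = x})
      (interleave (\<lambda>m. lo (\<alpha> m)) (\<lambda>m. hi (\<alpha> m))) (interleave (\<lambda>m. lo (\<beta> m)) (\<lambda>m. hi (\<beta> m))) (sL + sR)"
    by (rule lc_closed_cover_union lc_closed_cover_mono_image[OF cover mono(1) sL]
        lc_closed_cover_mono_image[OF cover mono(3) sR])+
  moreover have "Y \<subseteq> {x \<in> X. lo x = x} \<union> {x \<in> X. hi x = x}"
  proof
    fix y
    assume "y \<in> Y"
    hence "y \<in> X" "y \<notin> {a<..<b}"
      using assms(2,3) by auto
    thus "y \<in> {x \<in> X. lo x = x} \<union> {x \<in> X. hi x = x}"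
      by (auto simp: lo_def hi_def not_less)
  qed
  ultimately have "lc_closed_cover Y (interleave (\<lambda>m. lo (\<alpha> m)) (\<lambda>m. hi (\<alpha> m)))
      (interleave (\<lambda>m. lo (\<beta> m)) (\<lambda>m. hi (\<beta> m))) (sL + sR)"
    by (rule lc_closed_cover_subset)
  moreover have "sL + sR + (b - a) \<le> \<sigma>"
    using \<open>b - a \<le> sM\<close> by (simp add: \<sigma> add.left_commute)
  ultimately show thesis
    by (rule that)
qed

lemma lc_closed_cover_remove_intervals:
  assumes I: "\<And>n. lc_interval_ab (a n) (b n) (I n)" and "\<And>n. A \<inter> I n = {}"
    and "\<And>m n. m \<noteq> n \<Longrightarrow> I m \<inter> I n = {}"
    and "lc_closed_cover (A \<union> (\<Union>n<N. I n)) \<alpha> \<beta> \<sigma>"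
  shows "\<exists>\<alpha>' \<beta>' \<sigma>'. lc_closed_cover A \<alpha>' \<beta>' \<sigma>' \<and> \<sigma>' + lc_psum (\<lambda>n. b n - a n) N \<le> \<sigma>"
  using assms(4)
proof (induction N arbitrary: \<alpha> \<beta> \<sigma>)
  case 0
  thus ?case
    by auto
next
  case (Suc N)
  define Y where "Y = A \<union> (\<Union>n<N. I n)"
  have open_N: "{a N<..<b N} \<subseteq> I N"
    using lc_interval_ab_bounds(2)[OF I] .
  have "I n \<inter> I N = {}" if "n < N" for n
    using assms(3) that by simp
  hence "Y \<inter> {a N<..<b N} = {}"
    using assms(2) open_N unfolding Y_def by blast
  moreover have "Y \<union> {a N<..<b N} \<subseteq> A \<union> (\<Union>n<Suc N. I n)"
    using open_N by (auto simp: Y_def lessThan_Suc)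
  ultimately obtain \<alpha>1 \<beta>1 \<sigma>1 where Y: "lc_closed_cover Y \<alpha>1 \<beta>1 \<sigma>1" "\<sigma>1 + (b N - a N) \<le> \<sigma>"
    using lc_closed_cover_remove_interval[OF Suc.prems _ _ lc_interval_ab_bounds(1)[OF I]] by blast
  then obtain \<alpha>' \<beta>' \<sigma>' where A: "lc_closed_cover A \<alpha>' \<beta>' \<sigma>'"
    and le: "\<sigma>' + lc_psum (\<lambda>n. b n - a n) N \<le> \<sigma>1"
    using Suc.IH unfolding Y_def by blast
  have "\<sigma>' + lc_psum (\<lambda>n. b n - a n) (Suc N) = (\<sigma>' + lc_psum (\<lambda>n. b n - a n) N) + (b N - a N)"
    by (simp add: add.assoc)
  also have "\<dots> \<le> \<sigma>1 + (b N - a N)"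
    using le by (rule add_right_mono)
  also have "\<dots> \<le> \<sigma>"
    by (fact Y(2))
  finally show ?case
    using A by blast
qed

lemma lc_inf_add_le_cover_sum:
  assumes "lc_is_inf M (lc_cover_sums A)" "\<And>n. lc_interval_ab (a n) (b n) (I n)"
    and "\<And>n. A \<inter> I n = {}" "\<And>m n. m \<noteq> n \<Longrightarrow> I m \<inter> I n = {}"
    and "lc_sums (\<lambda>n. b n - a n) s" "\<sigma> \<in> lc_cover_sums (A \<union> (\<Union>n. I n))"
  shows "M + s \<le> \<sigma>"
proof -
  obtain \<alpha> \<beta> where cover: "lc_closed_cover (A \<union> (\<Union>n. I n)) \<alpha> \<beta> \<sigma>"
    using assms(6) by (rule lc_cover_sums_closed_cover)
  have "lc_psum (\<lambda>n. b n - a n) N \<le> \<sigma> - M" for N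
  proof -
    have "A \<union> (\<Union>n<N. I n) \<subseteq> A \<union> (\<Union>n. I n)"
      by auto
    with cover have "lc_closed_cover (A \<union> (\<Union>n<N. I n)) \<alpha> \<beta> \<sigma>"
      by (rule lc_closed_cover_subset)
    then obtain \<alpha>' \<beta>' \<sigma>' where "lc_closed_cover A \<alpha>' \<beta>' \<sigma>'" "\<sigma>' + lc_psum (\<lambda>n. b n - a n) N \<le> \<sigma>"
      using lc_closed_cover_remove_intervals[of a b I, OF assms(2-4)] by blast
    moreover from this(1) have "M \<le> \<sigma>'"
      by (rule lc_inf_le_closed_cover_sum[OF assms(1)])
    ultimately show ?thesis
      by (simp add: le_diff_eq add.commute) (metis add_right_mono order.trans)
  qed
  hence "s \<le> \<sigma> - M"
    using assms(5) lc_tendsto_le_const unfolding lc_sums_def by blast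
  thus ?thesis
    by (simp add: le_diff_eq add.commute)
qed

lemma lc_cover_sums_union:
  assumes "x \<in> lc_cover_sums A" "y \<in> lc_cover_sums B"
  shows "x + y \<in> lc_cover_sums (A \<union> B)"
proof -
  obtain S T where S: "lc_cover A S" "x = lc_suminf (\<lambda>n. lc_len (S n))"
    and T: "lc_cover B T" "y = lc_suminf (\<lambda>n. lc_len (T n))"
    using assms unfolding lc_cover_sums_def by blast
  have "lc_sums (interleave (\<lambda>n. lc_len (S n)) (\<lambda>n. lc_len (T n))) (x + y)"
    using S T by (intro lc_sums_interleave) (simp_all add: lc_cover_def lc_summable_sums)
  hence sums: "lc_sums (\<lambda>n. lc_len (interleave S T n)) (x + y)"
    by (simp only: interleave_map[of lc_len])
  have "\<forall>n. lc_interval (interleave S T n)"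
    using S(1) T(1) by (simp add: lc_cover_def interleave_def)
  moreover have "A \<union> B \<subseteq> (\<Union>n. interleave S T n)"
  proof
    fix z
    assume "z \<in> A \<union> B"
    hence "(\<exists>m. z \<in> S m) \<or> (\<exists>m. z \<in> T m)"
      using S(1) T(1) unfolding lc_cover_def by blast
    hence "\<exists>n. z \<in> interleave S T n"
      by (metis interleave_even interleave_odd)
    thus "z \<in> (\<Union>n. interleave S T n)"
      by blast
  qed
  ultimately have "lc_cover (A \<union> B) (interleave S T)"
    using sums unfolding lc_cover_def lc_summable_def by blast
  thus ?thesis
    using lc_suminf_eqI[OF sums] unfolding lc_cover_sums_def by force
qed

lemma lc_is_inf_add:
  assumes "lc_is_inf m X" "\<And>y. y \<in> Y \<Longrightarrow> m + s \<le> y" "\<And>x. x \<in> X \<Longrightarrow> x + s \<in> Y"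
  shows "lc_is_inf (m + s) Y"
  unfolding lc_is_inf_def
proof (intro conjI ballI allI impI)
  fix m'
  assume "\<forall>y\<in>Y. m' \<le> y"
  hence "\<forall>x\<in>X. m' - s \<le> x"
    using assms(3) by (simp add: diff_le_eq)
  hence "m' - s \<le> m"
    using assms(1) by (simp add: lc_is_inf_def)
  thus "m' \<le> m + s"
    by (simp add: diff_le_eq)
qed (rule assms(2))

lemma lc_Mu_eqI: "lc_is_inf m (lc_cover_sums A) \<Longrightarrow> lc_Mu A = m"
  unfolding lc_Mu_def lc_is_inf_def by (rule the_equality) (auto intro: order.antisym)

theorem mainTheorem7:
  fixes A :: "lc set" and I :: "nat \<Rightarrow> lc set"
  assumes "lc_outer_measurable A"
    and "\<And>n. lc_interval (I n)"
    and "\<And>m n. m \<noteq> n \<Longrightarrow> I m \<inter> I n = {}"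
    and "\<And>n. A \<inter> I n = {}"
    and "lc_tendsto (\<lambda>n. lc_len (I n)) 0"
  shows "lc_summable (\<lambda>n. lc_len (I n))
    \<and> lc_outer_measurable (A \<union> (\<Union>n. I n))
    \<and> lc_Mu (A \<union> (\<Union>n. I n)) = lc_Mu A + lc_suminf (\<lambda>n. lc_len (I n))"
proof -
  have "\<forall>n. \<exists>a b. lc_interval_ab a b (I n)"
    using assms(2) unfolding lc_interval_def by blast
  then obtain a b where ab: "\<And>n. lc_interval_ab (a n) (b n) (I n)"
    by metis
  obtain M where M: "lc_is_inf M (lc_cover_sums A)"
    using assms(1) unfolding lc_outer_measurable_def by blast
  define s where "s = lc_suminf (\<lambda>n. lc_len (I n))"
  have summable: "lc_summable (\<lambda>n. lc_len (I n))"
    using assms(5) lc_summable_iff_tendsto_zero by blast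
  hence sums: "lc_sums (\<lambda>n. b n - a n) s"
    unfolding s_def lc_len_eq[OF ab, symmetric] by (rule lc_summable_sums)
  have "lc_cover (\<Union>n. I n) I"
    using assms(2) summable by (simp add: lc_cover_def)
  hence cover_I: "s \<in> lc_cover_sums (\<Union>n. I n)"
    unfolding s_def lc_cover_sums_def by blast
  have "lc_is_inf (M + s) (lc_cover_sums (A \<union> (\<Union>n. I n)))"
  proof (rule lc_is_inf_add[OF M])
    show "M + s \<le> y" if "y \<in> lc_cover_sums (A \<union> (\<Union>n. I n))" for y
      by (rule lc_inf_add_le_cover_sum[OF M ab assms(4,3) sums that])
    show "x + s \<in> lc_cover_sums (A \<union> (\<Union>n. I n))" if "x \<in> lc_cover_sums A" for x
      using that cover_I by (rule lc_cover_sums_union)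
  qed
  thus ?thesis
    using summable lc_Mu_eqI[OF M] lc_Mu_eqI unfolding lc_outer_measurable_def s_def by blast
qed

end
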